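(* Fix a trial $t$ with current parameters $\mathbf{w}^t\in\mathbb{R}^d$ and thresholds $\theta_1^t\le\theta_2^t\le\dots\le\theta_{K-1}^t$, an instance $\mathbf{x}^t\in\mathbb{R}^d$ and an interval label $1\le y_l^t\le y_r^t\le K$. Let $l_i^t=\max(0,1+\theta_i^t-\mathbf{w}^t\cdot\mathbf{x}^t)$ for $1\le i\le y_l^t-1$ and $l_i^t=\max(0,1+\mathbf{w}^t\cdot\mathbf{x}^t-\theta_i^t)$ for $y_r^t\le i\le K-1$. Let $S_l^t\subseteq\{1,\dots,y_l^t-1\}$ and $S_r^t\subseteq\{y_r^t,\dots,K-1\}$ be the current left and right support sets, and for an index $j\in\{1,\dots,y_l^t-1\}\setminus S_l^t$ define its candidate Lagrange multiplier $$\lambda_j^t=l_j^t-\frac{\Vert\mathbf{x}^t\Vert^2\left(l_j^t+\sum_{i\in S_l^t}l_i^t-\sum_{i\in S_r^t}l_i^t\right)}{1+\Vert\mathbf{x}^t\Vert^2\left(1+|S_l^t|+|S_r^t|\right)};$$ an index $j\notin S_l^t$ is admitted to $S_l^t$ iff $\lambda_j^t>0$. Assume $S_l^t\neq\emptyset$, and let $k\notin S_l^t$ with $k+1\in S_l^t$, where $k$ is not admitted, i.e. $\lambda_k^t\le 0$. Then every $k'<k$ with $k'\notin S_l^t$ is also not admitted: $\lambda_{k'}^t\le 0$.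
   Context: This concerns an online passive-aggressive algorithm for ranking into $K$ ordered classes with interval labels. A ranking classifier is given by $\mathbf{w}\in\mathbb{R}^d$ and thresholds $\theta_1\le\dots\le\theta_{K-1}$; an example $\mathbf{x}^t$ comes with an interval label $[y_l^t,y_r^t]$ containing its true rank. At each trial, the thresholds to be updated on the left of the interval form the "left support set" $S_l^t$ (indices with positive Lagrange multiplier in the update's KKT conditions), built greedily by testing candidate indices via the multiplier formula above with the current $S_l^t,S_r^t$. *)

theory Defs
  imports "HOL-Analysis.Analysis"
begin

definition left_loss :: "real ^ 'd \<Rightarrow> real ^ 'd \<Rightarrow> (nat \<Rightarrow> real) \<Rightarrow> nat \<Rightarrow> real" where
  "left_loss w x \<theta> i = max 0 (1 + \<theta> i - w \<bullet> x)"

definition right_loss :: "real ^ 'd \<Rightarrow> real ^ 'd \<Rightarrow> (nat \<Rightarrow> real) \<Rightarrow> nat \<Rightarrow> real" where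
  "right_loss w x \<theta> i = max 0 (1 + w \<bullet> x - \<theta> i)"

definition cand_mult ::
  "real ^ 'd \<Rightarrow> real ^ 'd \<Rightarrow> (nat \<Rightarrow> real) \<Rightarrow> nat set \<Rightarrow> nat set \<Rightarrow> nat \<Rightarrow> real" where
  "cand_mult w x \<theta> Sl Sr j =
     left_loss w x \<theta> j
     - (norm x)^2 * (left_loss w x \<theta> j + (\<Sum>i\<in>Sl. left_loss w x \<theta> i) - (\<Sum>i\<in>Sr. right_loss w x \<theta> i))
       / (1 + (norm x)^2 * (1 + real (card Sl) + real (card Sr)))"

definition admitted ::
  "real ^ 'd \<Rightarrow> real ^ 'd \<Rightarrow> (nat \<Rightarrow> real) \<Rightarrow> nat set \<Rightarrow> nat set \<Rightarrow> nat \<Rightarrow> bool" where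
  "admitted w x \<theta> Sl Sr j \<longleftrightarrow> cand_mult w x \<theta> Sl Sr j > 0"

end

theory Submission
  imports Defs
begin

text \<open>The candidate multiplier depends on \<open>j\<close> only through the loss \<open>l\<^sub>j\<close>, and as an affine
  function of \<open>l\<^sub>j\<close> with slope \<open>1 - \<parallel>x\<parallel>\<^sup>2 / D \<ge> 0\<close>, where \<open>D\<close> is its denominator. Since
  \<open>l\<^sub>j\<close> grows with \<open>\<theta>\<^sub>j\<close> and the thresholds are sorted, \<open>\<lambda>\<^sub>k\<^sub>' \<le> \<lambda>\<^sub>k \<le> 0\<close> for \<open>k' < k\<close>.\<close>

lemma left_loss_mono:
  assumes "\<theta> i \<le> \<theta> j"
  shows "left_loss w x \<theta> i \<le> left_loss w x \<theta> j"
  using assms unfolding left_loss_def by simp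

lemma cand_mult_affine:
  fixes w x :: "real ^ 'd" and \<theta> :: "nat \<Rightarrow> real" and Sl Sr :: "nat set"
  defines "D \<equiv> 1 + (norm x)^2 * (1 + real (card Sl) + real (card Sr))"
    and "A \<equiv> (\<Sum>i\<in>Sl. left_loss w x \<theta> i) - (\<Sum>i\<in>Sr. right_loss w x \<theta> i)"
  shows "cand_mult w x \<theta> Sl Sr j
           = left_loss w x \<theta> j * ((D - (norm x)^2) / D) - (norm x)^2 * A / D"
proof -
  have "D > 0"
    unfolding D_def by (simp add: add_pos_nonneg)
  then show ?thesis
    unfolding cand_mult_def D_def [symmetric] A_def
    by (simp add: field_simps)
qed

lemma cand_mult_mono:
  assumes "left_loss w x \<theta> i \<le> left_loss w x \<theta> j"
  shows "cand_mult w x \<theta> Sl Sr i \<le> cand_mult w x \<theta> Sl Sr j"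
proof -
  define D where "D = 1 + (norm x)^2 * (1 + real (card Sl) + real (card Sr))"
  have "D - (norm x)^2 \<ge> 1"
    unfolding D_def by (simp add: algebra_simps)
  then have "(D - (norm x)^2) / D \<ge> 0"
    by (simp add: D_def add_pos_nonneg)
  with assms have "left_loss w x \<theta> i * ((D - (norm x)^2) / D)
                    \<le> left_loss w x \<theta> j * ((D - (norm x)^2) / D)"
    by (rule mult_right_mono)
  then show ?thesis
    unfolding cand_mult_affine D_def [symmetric] by linarith
qed

theorem lemma1:
  fixes w x :: "real ^ 'd" and \<theta> :: "nat \<Rightarrow> real"
    and K yl yr k k' :: nat and Sl Sr :: "nat set"
  assumes sorted: "\<And>i j. 1 \<le> i \<Longrightarrow> i \<le> j \<Longrightarrow> j \<le> K - 1 \<Longrightarrow> \<theta> i \<le> \<theta> j"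
    and label: "1 \<le> yl" "yl \<le> yr" "yr \<le> K"
    and Sl_sub: "Sl \<subseteq> {1..yl - 1}"
    and Sr_sub: "Sr \<subseteq> {yr..K - 1}"
    and Sl_ne: "Sl \<noteq> {}"
    and k_range: "k \<in> {1..yl - 1}" and k_notin: "k \<notin> Sl" and k1_in: "k + 1 \<in> Sl"
    and k_not_adm: "\<not> admitted w x \<theta> Sl Sr k"
    and k'_range: "k' \<in> {1..yl - 1}" and k'_less: "k' < k" and k'_notin: "k' \<notin> Sl"
  shows "\<not> admitted w x \<theta> Sl Sr k'"
proof -
  have "\<theta> k' \<le> \<theta> k"
    using sorted [of k' k] k'_range k'_less k_range label by auto
  then have "cand_mult w x \<theta> Sl Sr k' \<le> cand_mult w x \<theta> Sl Sr k"
    by (intro cand_mult_mono left_loss_mono)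
  with k_not_adm show ?thesis
    unfolding admitted_def by simp
qed

end
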